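(* Let $D\subset\mathbb N^n$ be finite, not contained in any coordinate hyperplane, $p$ a prime, and $U\in E_{D,p}(r)$ a minimal solution. Then $\mathrm{Im}\,\varphi_U\subset\Sigma_p(D)$.
   Context: $s_p$ = base-$p$ digit sum. $E_{D,p}(r)$ = set of $U=(u_{\mathbf d})\in\{0,\dots,p^r-1\}^D$ with $\sum u_{\mathbf d}\mathbf d\equiv0\pmod{p^r-1}$ and all coordinates of $\sum u_{\mathbf d}\mathbf d$ positive; $s_p(U)=\sum s_p(u_{\mathbf d})$; $\delta_p(D)=\frac1{p-1}\min_{r\ge1}\min_{U\in E_{D,p}(r)}s_p(U)/r$; $U\in E_{D,p}(r)$ is minimal if $s_p(U)=(p-1)r\delta_p(D)$. Shift $\delta_r$: $k\mapsto pk\bmod(p^r-1)$ for $k\le p^r-2$, $p^r-1\mapsto p^r-1$, coordinatewise. $\varphi_U(k)=\frac1{p^r-1}\sum\mathbf d(\delta_r^kU)_{\mathbf d}$ for $k\in\mathbb Z/r\mathbb Z$; $U$ irreducible if $\varphi_U$ injective; $MI_{D,p}$ = set of minimal irreducible elements of all lengths; $\Sigma_p(D)=\bigcup_{U\in MI_{D,p}}\mathrm{Im}\varphi_U$. *)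

theory Defs
  imports Complex_Main "HOL-Computational_Algebra.Primes"
begin

(* Points of N^n are modelled as functions 'n \<Rightarrow> nat for a finite index type 'n. *)

fun digit_sum :: "nat \<Rightarrow> nat \<Rightarrow> nat" where
  "digit_sum p k = (if p \<le> 1 \<or> k = 0 then 0 else k mod p + digit_sum p (k div p))"

definition vsum :: "('n \<Rightarrow> nat) set \<Rightarrow> (('n \<Rightarrow> nat) \<Rightarrow> nat) \<Rightarrow> 'n \<Rightarrow> nat" where
  "vsum D U = (\<lambda>i. \<Sum>d\<in>D. U d * d i)"

(* E_{D,p}(r); U is a family indexed by D (extensional: zero outside D) *)
definition E_set :: "('n \<Rightarrow> nat) set \<Rightarrow> nat \<Rightarrow> nat \<Rightarrow> (('n \<Rightarrow> nat) \<Rightarrow> nat) set" where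
  "E_set D p r = {U. 1 \<le> r \<and> (\<forall>d\<in>D. U d \<le> p ^ r - 1) \<and> (\<forall>d. d \<notin> D \<longrightarrow> U d = 0)
      \<and> (\<forall>i. (p ^ r - 1) dvd vsum D U i) \<and> (\<forall>i. 0 < vsum D U i)}"

definition sp :: "('n \<Rightarrow> nat) set \<Rightarrow> nat \<Rightarrow> (('n \<Rightarrow> nat) \<Rightarrow> nat) \<Rightarrow> nat" where
  "sp D p U = (\<Sum>d\<in>D. digit_sum p (U d))"

(* \<delta>_p(D); the minimum is written as an infimum (it equals the minimum when attained) *)
definition delta :: "nat \<Rightarrow> ('n \<Rightarrow> nat) set \<Rightarrow> real" where
  "delta p D = (1 / (real p - 1)) *
     Inf {real (sp D p U) / real r | r U. 1 \<le> r \<and> U \<in> E_set D p r}"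

definition minimal :: "('n \<Rightarrow> nat) set \<Rightarrow> nat \<Rightarrow> nat \<Rightarrow> (('n \<Rightarrow> nat) \<Rightarrow> nat) \<Rightarrow> bool" where
  "minimal D p r U \<longleftrightarrow> U \<in> E_set D p r \<and>
     real (sp D p U) = (real p - 1) * real r * delta p D"

definition shift_num :: "nat \<Rightarrow> nat \<Rightarrow> nat \<Rightarrow> nat" where
  "shift_num p r k = (if k = p ^ r - 1 then p ^ r - 1 else (p * k) mod (p ^ r - 1))"

definition shift :: "nat \<Rightarrow> nat \<Rightarrow> (('n \<Rightarrow> nat) \<Rightarrow> nat) \<Rightarrow> (('n \<Rightarrow> nat) \<Rightarrow> nat)" where
  "shift p r U = (\<lambda>d. shift_num p r (U d))"

(* \<phi>_U(k) for k \<in> Z/rZ, represented by k \<in> {0..<r} *)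
definition phi :: "('n \<Rightarrow> nat) set \<Rightarrow> nat \<Rightarrow> nat \<Rightarrow> (('n \<Rightarrow> nat) \<Rightarrow> nat) \<Rightarrow> nat \<Rightarrow> ('n \<Rightarrow> real)" where
  "phi D p r U k = (\<lambda>i. real (vsum D ((shift p r ^^ k) U) i) / real (p ^ r - 1))"

definition irreducible_sol :: "('n \<Rightarrow> nat) set \<Rightarrow> nat \<Rightarrow> nat \<Rightarrow> (('n \<Rightarrow> nat) \<Rightarrow> nat) \<Rightarrow> bool" where
  "irreducible_sol D p r U \<longleftrightarrow> inj_on (phi D p r U) {0..<r}"

(* MI_{D,p}: minimal irreducible elements, paired with their length r *)
definition MI :: "('n \<Rightarrow> nat) set \<Rightarrow> nat \<Rightarrow> (nat \<times> (('n \<Rightarrow> nat) \<Rightarrow> nat)) set" where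
  "MI D p = {(r, U). minimal D p r U \<and> irreducible_sol D p r U}"

definition Sigma_p :: "nat \<Rightarrow> ('n \<Rightarrow> nat) set \<Rightarrow> ('n \<Rightarrow> real) set" where
  "Sigma_p p D = (\<Union>(r, U)\<in>MI D p. phi D p r U ` {0..<r})"

end

theory Submission
  imports Defs "HOL-Number_Theory.Cong"
begin

(* If a minimal solution U is not irreducible, then phi_U(k1) = phi_U(k2) for some k1 < k2.
   Rotating U by k1 digits gives a solution W with phi_W(m) = phi_W(0), where m = k2 - k1.
   Splitting every entry of W into its top m and its bottom r - m base-p digits yields solutions
   V and L of lengths m and r - m with s_p(V) + s_p(L) = s_p(U).  As s_p/length is at least
   (p - 1) delta_p(D) on every solution, V and L are again minimal, and the values of phi_W are
   those of phi_V followed by those of phi_L. *)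

declare digit_sum.simps[simp del]

lemma digit_sum_0 [simp]: "digit_sum p 0 = 0"
  by (simp add: digit_sum.simps)

lemma digit_sum_eq: "p \<ge> 2 \<Longrightarrow> digit_sum p x = x mod p + digit_sum p (x div p)"
  by (subst digit_sum.simps) auto

lemma digit_sum_mult_power_add:
  assumes p: "p \<ge> 2" and y: "y < p ^ j"
  shows "digit_sum p (x * p ^ j + y) = digit_sum p x + digit_sum p y"
  using y
proof (induction j arbitrary: y)
  case (Suc j)
  have "y div p < p ^ j"
    using Suc.prems p by (simp add: div_less_iff_less_mult mult.commute)
  moreover have "(x * p ^ Suc j + y) mod p = y mod p"
    and "(x * p ^ Suc j + y) div p = x * p ^ j + y div p"
    using p by (simp_all add: algebra_simps)
  ultimately show ?case
    using Suc.IH digit_sum_eq[OF p, of y] digit_sum_eq[OF p, of "x * p ^ Suc j + y"] by simp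
qed simp

lemma mixed_radix_less:
  fixes a b P q :: nat
  assumes "a < P" "b < q"
  shows "b * P + a < q * P"
proof -
  have "b * P + a < (b + 1) * P" using assms(1) by simp
  also have "\<dots> \<le> q * P" using assms(2) by (intro mult_right_mono) auto
  finally show ?thesis .
qed

lemma mixed_radix_eq_max_iff:
  fixes a b P q :: nat
  assumes a: "a < P" and b: "b < q"
  shows "b * P + a = q * P - 1 \<longleftrightarrow> a = P - 1 \<and> b = q - 1"
proof
  assume eq: "b * P + a = q * P - 1"
  have "b + 1 = q"
  proof (rule ccontr)
    assume "b + 1 \<noteq> q"
    then have "(b + 1) * P + a < q * P" using mixed_radix_less[OF a, of "b + 1" q] b by simp
    then show False using eq a by (simp add: algebra_simps)
  qed
  then have "q * P = b * P + P" by (metis add.commute mult_Suc Suc_eq_plus1)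
  with eq a \<open>b + 1 = q\<close> show "a = P - 1 \<and> b = q - 1" by linarith
next
  assume "a = P - 1 \<and> b = q - 1"
  with a b show "b * P + a = q * P - 1" by (simp add: algebra_simps)
qed

lemma power_ge_2: "p \<ge> 2 \<Longrightarrow> R \<ge> 1 \<Longrightarrow> p ^ R \<ge> (2::nat)"
  using power_increasing[of 1 R p] by simp

context
  fixes p R :: nat
  assumes top: "p ^ R \<ge> 2"
begin

lemma shift_num_le: "shift_num p R x \<le> p ^ R - 1"
  using top by (simp add: shift_num_def less_imp_le)

lemma shift_num_eq_top_iff: "shift_num p R x = p ^ R - 1 \<longleftrightarrow> x = p ^ R - 1"
proof -
  have "p * x mod (p ^ R - 1) < p ^ R - 1" using top by simp
  then show ?thesis by (auto simp: shift_num_def)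
qed

lemma shift_num_mod: "shift_num p R x mod (p ^ R - 1) = p * x mod (p ^ R - 1)"
  by (simp add: shift_num_def)

lemma funpow_shift_num_le: "x \<le> p ^ R - 1 \<Longrightarrow> (shift_num p R ^^ j) x \<le> p ^ R - 1"
  by (cases j) (use shift_num_le in auto)

lemma funpow_shift_num_eq_top_iff: "(shift_num p R ^^ j) x = p ^ R - 1 \<longleftrightarrow> x = p ^ R - 1"
  by (induction j) (use shift_num_eq_top_iff in simp_all)

lemma funpow_shift_num_mod: "(shift_num p R ^^ j) x mod (p ^ R - 1) = p ^ j * x mod (p ^ R - 1)"
proof (induction j)
  case (Suc j)
  have "(shift_num p R ^^ Suc j) x mod (p ^ R - 1)
      = p * ((shift_num p R ^^ j) x mod (p ^ R - 1)) mod (p ^ R - 1)"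
    using shift_num_mod[of "(shift_num p R ^^ j) x"] by (simp add: mod_mult_right_eq)
  also have "\<dots> = p ^ Suc j * x mod (p ^ R - 1)"
    by (metis Suc.IH mod_mult_right_eq mult.assoc power_Suc)
  finally show ?case .
qed simp

end

(* On R-digit base-p expansions the shift is the cyclic rotation of digits.  Both sides are the
   unique c \<le> p^R - 1 with c \<equiv> p^j x (mod p^R - 1) that equals p^R - 1 exactly when x does. *)
lemma funpow_shift_num_rotate:
  assumes p: "p \<ge> 2" and R: "R \<ge> 1" and j: "j \<le> R" and x: "x \<le> p ^ R - 1"
  shows "(shift_num p R ^^ j) x = (x mod p ^ (R - j)) * p ^ j + x div p ^ (R - j)"
    and "(shift_num p R ^^ j) x + (x div p ^ (R - j)) * (p ^ R - 1) = p ^ j * x"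
proof -
  define q P a b where "q = p ^ (R - j)" and "P = p ^ j"
    and "a = x div p ^ (R - j)" and "b = x mod p ^ (R - j)"
  have top: "p ^ R \<ge> 2" using power_ge_2[OF p R] .
  have qP: "q * P = p ^ R" using j by (simp add: q_def P_def flip: power_add)
  have x_eq: "x = a * q + b" unfolding a_def b_def q_def by (rule div_mult_mod_eq[symmetric])
  have b_less: "b < q" using p by (simp add: b_def q_def)
  have a_less: "a < P"
    using x top qP by (simp add: a_def P_def q_def less_mult_imp_div_less mult.commute)
  define s c where "s = (shift_num p R ^^ j) x" and "c = b * P + a"
  have "a \<le> a * p ^ R" using top by simp
  then have "a + a * (p ^ R - 1) = a * (q * P)" by (simp add: qP right_diff_distrib')
  then have carry: "c + a * (p ^ R - 1) = p ^ j * x"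
    by (simp add: c_def x_eq algebra_simps flip: P_def)
  have c_le: "c \<le> p ^ R - 1" using mixed_radix_less[OF a_less b_less] qP by (simp add: c_def)
  have "c = p ^ R - 1 \<longleftrightarrow> a = P - 1 \<and> b = q - 1"
    using mixed_radix_eq_max_iff[OF a_less b_less] qP by (simp add: c_def)
  also have "\<dots> \<longleftrightarrow> x = p ^ R - 1"
    using mixed_radix_eq_max_iff[OF b_less a_less] qP by (auto simp: x_eq mult.commute)
  also have "\<dots> \<longleftrightarrow> s = p ^ R - 1" unfolding s_def by (rule funpow_shift_num_eq_top_iff[OF top, symmetric])
  finally have top_iff: "c = p ^ R - 1 \<longleftrightarrow> s = p ^ R - 1" .
  have "s mod (p ^ R - 1) = c mod (p ^ R - 1)"
    using funpow_shift_num_mod[OF top] carry by (simp add: s_def flip: carry)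
  moreover have "s \<le> p ^ R - 1" using funpow_shift_num_le[OF top x] by (simp add: s_def)
  ultimately have "s = c" using c_le top_iff by (metis le_neq_implies_less mod_less)
  then show "(shift_num p R ^^ j) x = (x mod p ^ (R - j)) * p ^ j + x div p ^ (R - j)"
    and "(shift_num p R ^^ j) x + (x div p ^ (R - j)) * (p ^ R - 1) = p ^ j * x"
    using carry by (simp_all add: s_def c_def a_def b_def P_def)
qed

lemma digit_sum_shift_num:
  assumes p: "p \<ge> 2" and R: "R \<ge> 1" and x: "x \<le> p ^ R - 1"
  shows "digit_sum p (shift_num p R x) = digit_sum p x"
proof -
  define q where "q = p ^ (R - 1)"
  have rot: "shift_num p R x = (x mod q) * p + x div q"
    using funpow_shift_num_rotate(1)[OF p R _ x, of 1] R by (simp add: q_def)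
  have "x < p * q" using x power_ge_2[OF p R] R by (simp add: q_def flip: power_Suc)
  then have "x div q < p ^ 1" by (simp add: less_mult_imp_div_less)
  then have "digit_sum p (shift_num p R x) = digit_sum p (x mod q) + digit_sum p (x div q)"
    unfolding rot by (metis digit_sum_mult_power_add[OF p] power_one_right)
  also have "\<dots> = digit_sum p ((x div q) * q + x mod q)"
    using p by (simp add: q_def digit_sum_mult_power_add[OF p])
  finally show ?thesis by simp
qed

lemma shift_num_pos:
  assumes p: "p \<ge> 2" and R: "R \<ge> 1" and x: "x \<le> p ^ R - 1" "0 < x"
  shows "0 < shift_num p R x"
proof -
  define q where "q = p ^ (R - 1)"
  have "shift_num p R x = (x mod q) * p + x div q"
    using funpow_shift_num_rotate(1)[OF p R _ x(1), of 1] R by (simp add: q_def)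
  moreover have "x = (x div q) * q + x mod q" by simp
  ultimately show ?thesis using p x(2) by (metis add_gr_0 gr0I mult_is_0 not_numeral_le_zero)
qed

lemma funpow_shift_apply: "(shift p R ^^ j) X d = (shift_num p R ^^ j) (X d)"
  by (induction j) (simp_all add: shift_def)

definition high_digits :: "nat \<Rightarrow> nat \<Rightarrow> (('n \<Rightarrow> nat) \<Rightarrow> nat) \<Rightarrow> ('n \<Rightarrow> nat) \<Rightarrow> nat" where
  "high_digits p k X = (\<lambda>d. X d div p ^ k)"

definition low_digits :: "nat \<Rightarrow> nat \<Rightarrow> (('n \<Rightarrow> nat) \<Rightarrow> nat) \<Rightarrow> ('n \<Rightarrow> nat) \<Rightarrow> nat" where
  "low_digits p k X = (\<lambda>d. X d mod p ^ k)"

lemma vsum_funpow_shift: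
  assumes p: "p \<ge> 2" and R: "R \<ge> 1" and j: "j \<le> R" and X: "\<forall>d\<in>D. X d \<le> p ^ R - 1"
  shows "vsum D ((shift p R ^^ j) X) i + (p ^ R - 1) * vsum D (high_digits p (R - j) X) i
    = p ^ j * vsum D X i"
proof -
  have "vsum D ((shift p R ^^ j) X) i + (p ^ R - 1) * vsum D (high_digits p (R - j) X) i
      = (\<Sum>d\<in>D. ((shift_num p R ^^ j) (X d) + (X d div p ^ (R - j)) * (p ^ R - 1)) * d i)"
    by (simp add: vsum_def high_digits_def funpow_shift_apply sum_distrib_left
        sum.distrib algebra_simps)
  also have "\<dots> = (\<Sum>d\<in>D. p ^ j * X d * d i)"
    using funpow_shift_num_rotate(2)[OF p R j] X by (intro sum.cong) auto
  finally show ?thesis by (simp add: vsum_def sum_distrib_left mult.assoc)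
qed

lemma phi_eq_diff_high_digits:
  assumes p: "p \<ge> 2" and R: "R \<ge> 1" and j: "j \<le> R" and X: "\<forall>d\<in>D. X d \<le> p ^ R - 1"
    and g: "vsum D X i = (p ^ R - 1) * g"
  shows "phi D p R X j i = real (p ^ j * g) - real (vsum D (high_digits p (R - j) X) i)"
proof -
  define M where "M = p ^ R - 1"
  have "M > 0" using power_ge_2[OF p R] by (simp add: M_def)
  have "vsum D ((shift p R ^^ j) X) i + M * vsum D (high_digits p (R - j) X) i = M * (p ^ j * g)"
    using vsum_funpow_shift[OF p R j X, of i] g by (simp add: M_def algebra_simps)
  then have "real (vsum D ((shift p R ^^ j) X) i) + real M * real (vsum D (high_digits p (R - j) X) i)
      = real M * real (p ^ j * g)"
    by (metis of_nat_add of_nat_mult)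
  then have "real (vsum D ((shift p R ^^ j) X) i)
      = real M * (real (p ^ j * g) - real (vsum D (high_digits p (R - j) X) i))"
    by (simp add: algebra_simps)
  with \<open>M > 0\<close> show ?thesis unfolding phi_def M_def[symmetric] by simp
qed

lemma E_set_digits_le: "U \<in> E_set D p r \<Longrightarrow> U d \<le> p ^ r - 1"
  by (cases "d \<in> D") (auto simp: E_set_def)

lemma shift_in_E_set:
  assumes p: "p \<ge> 2" and fin: "finite D" and U: "U \<in> E_set D p r"
  shows "shift p r U \<in> E_set D p r"
proof -
  have R: "r \<ge> 1" and le: "\<forall>d\<in>D. U d \<le> p ^ r - 1" and zero: "\<forall>d. d \<notin> D \<longrightarrow> U d = 0"
    and dvd: "\<forall>i. (p ^ r - 1) dvd vsum D U i" and pos: "\<forall>i. 0 < vsum D U i"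
    using U by (auto simp: E_set_def)
  have top: "p ^ r \<ge> 2" using power_ge_2[OF p R] .
  have "(p ^ r - 1) dvd vsum D (shift p r U) i" for i
  proof -
    have "vsum D (shift p r U) i + (p ^ r - 1) * vsum D (high_digits p (r - 1) U) i
        = p * vsum D U i"
      using vsum_funpow_shift[OF p R _ le, of 1 i] R by simp
    then show ?thesis using dvd
      by (metis dvd_add_times_triv_right_iff dvd_mult mult.commute)
  qed
  moreover have "0 < vsum D (shift p r U) i" for i
  proof -
    have "vsum D U i \<noteq> 0" using pos by simp
    then have "\<exists>d\<in>D. U d * d i \<noteq> 0" using fin by (simp add: vsum_def)
    then obtain d where "d \<in> D" "0 < U d" "0 < d i" by auto
    then have "0 < shift p r U d * d i"
      using shift_num_pos[OF p R] le by (simp add: shift_def)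
    then show ?thesis
      using sum_pos2[OF fin \<open>d \<in> D\<close>, of "\<lambda>d. shift p r U d * d i"] by (simp add: vsum_def)
  qed
  moreover have "shift p r U d \<le> p ^ r - 1" for d
    using shift_num_le[OF top] by (simp add: shift_def)
  moreover have "shift p r U d = 0" if "d \<notin> D" for d
    using zero that top by (simp add: shift_def shift_num_def)
  ultimately show ?thesis using R by (simp add: E_set_def)
qed

lemma sp_shift:
  assumes p: "p \<ge> 2" and U: "U \<in> E_set D p r"
  shows "sp D p (shift p r U) = sp D p U"
proof -
  have "r \<ge> 1" using U by (simp add: E_set_def)
  then show ?thesis
    unfolding sp_def shift_def
    using digit_sum_shift_num[OF p] E_set_digits_le[OF U] by simp
qed

lemma funpow_shift_in_E_set:
  assumes "p \<ge> 2" "finite D" "U \<in> E_set D p r"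
  shows "(shift p r ^^ k) U \<in> E_set D p r"
  by (induction k) (simp_all add: assms shift_in_E_set)

lemma sp_funpow_shift:
  assumes "p \<ge> 2" "finite D" "U \<in> E_set D p r"
  shows "sp D p ((shift p r ^^ k) U) = sp D p U"
  by (induction k) (simp_all add: assms sp_shift funpow_shift_in_E_set)

lemma funpow_shift_period:
  assumes p: "p \<ge> 2" and U: "U \<in> E_set D p r"
  shows "(shift p r ^^ r) U = U"
proof
  fix d
  have "r \<ge> 1" using U by (simp add: E_set_def)
  then show "(shift p r ^^ r) U d = U d"
    using funpow_shift_num_rotate(1)[OF p _ order.refl E_set_digits_le[OF U]]
    by (simp add: funpow_shift_apply)
qed

lemma phi_funpow_shift: "phi D p r ((shift p r ^^ k) U) j = phi D p r U (j + k)"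
  by (simp add: phi_def funpow_add)

lemma phi_add_period:
  assumes "p \<ge> 2" "U \<in> E_set D p r"
  shows "phi D p r U (k + r) = phi D p r U k"
proof -
  have "(shift p r ^^ (k + r)) U = (shift p r ^^ k) U"
    using funpow_shift_period[OF assms] by (simp add: funpow_add)
  then show ?thesis unfolding phi_def by simp
qed

lemma high_digits_high_digits:
  "high_digits p a (high_digits p b X) = high_digits p (b + a) X"
  by (simp add: high_digits_def power_add div_mult2_eq)

lemma high_digits_of_low_digits:
  assumes "p > 0" "j \<le> k"
  shows "high_digits p (k - j) X d
    = high_digits p k X d * p ^ j + high_digits p (k - j) (low_digits p k X) d"
proof -
  have pk: "p ^ k = p ^ j * p ^ (k - j)" using assms(2) by (simp flip: power_add)
  have "X d = (X d mod p ^ k) + (X d div p ^ k * p ^ j) * p ^ (k - j)"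
    using div_mult_mod_eq[of "X d" "p ^ k"] by (simp add: pk mult.assoc)
  then have "X d div p ^ (k - j) = X d div p ^ k * p ^ j + X d mod p ^ k div p ^ (k - j)"
    using assms(1) by (metis div_mult_self1 power_not_zero not_gr0)
  then show ?thesis by (simp add: high_digits_def low_digits_def)
qed

lemma sp_high_low_digits:
  assumes "p \<ge> 2"
  shows "sp D p W = sp D p (high_digits p k W) + sp D p (low_digits p k W)"
proof -
  have "digit_sum p (W d) = digit_sum p (W d div p ^ k) + digit_sum p (W d mod p ^ k)" for d
    using digit_sum_mult_power_add[OF assms, of "W d mod p ^ k" k "W d div p ^ k"] assms
    by (simp only: div_mult_mod_eq mod_less_divisor zero_less_power)
  then show ?thesis by (simp add: sp_def high_digits_def low_digits_def sum.distrib)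
qed

lemma vsum_high_low_digits:
  "vsum D W i = p ^ k * vsum D (high_digits p k W) i + vsum D (low_digits p k W) i"
proof -
  have "W d * d i = p ^ k * (W d div p ^ k * d i) + W d mod p ^ k * d i" for d
    by (metis add_mult_distrib div_mult_mod_eq mult.assoc mult.commute)
  then show ?thesis
    by (simp add: vsum_def high_digits_def low_digits_def sum.distrib sum_distrib_left)
qed

lemma vsum_digits_of_phi_eq:
  assumes p: "p \<ge> 2" and W: "W \<in> E_set D p r" and m: "m \<le> r"
    and period: "phi D p r W m = phi D p r W 0" and g: "vsum D W i = (p ^ r - 1) * g"
  shows "vsum D (high_digits p (r - m) W) i = (p ^ m - 1) * g"
    and "vsum D (low_digits p (r - m) W) i = (p ^ (r - m) - 1) * g"
proof -
  define M H Lo where "M = p ^ r - 1" and "H = vsum D (high_digits p (r - m) W) i"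
    and "Lo = vsum D (low_digits p (r - m) W) i"
  have R: "r \<ge> 1" and le: "\<forall>d\<in>D. W d \<le> p ^ r - 1" using W by (auto simp: E_set_def)
  have top: "p ^ r \<ge> 2" using power_ge_2[OF p R] .
  then have M: "M > 0" by (simp add: M_def)
  (* The period makes the rotation by m keep vsum; its carries are exactly the high digits. *)
  have "real (vsum D ((shift p r ^^ m) W) i) / real M = real (vsum D W i) / real M"
    using fun_cong[OF period, of i] by (simp only: phi_def funpow_0 M_def)
  then have "vsum D ((shift p r ^^ m) W) i = vsum D W i"
    using M by (metis divide_cancel_right of_nat_eq_0_iff of_nat_eq_iff not_gr0)
  then have "M * g + M * H = p ^ m * (M * g)"
    using vsum_funpow_shift[OF p R m le, of i] g by (simp add: M_def H_def)
  then have "M * (g + H) = M * (p ^ m * g)" by (simp add: algebra_simps)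
  then have "g + H = p ^ m * g" using M by simp
  then show high: "H = (p ^ m - 1) * g" by (simp add: diff_mult_distrib)
  have pr: "p ^ r = p ^ (r - m) * p ^ m" using m by (simp flip: power_add)
  have "p ^ m \<ge> 1" "p ^ (r - m) \<ge> 1" using p by simp_all
  then have M_split: "M = p ^ (r - m) * (p ^ m - 1) + (p ^ (r - m) - 1)"
    by (simp add: M_def pr algebra_simps diff_mult_distrib2)
  have "M * g = p ^ (r - m) * H + Lo"
    using vsum_high_low_digits[of D W i p "r - m"] g by (simp add: H_def Lo_def M_def)
  then show "Lo = (p ^ (r - m) - 1) * g"
    unfolding M_split high by (simp add: algebra_simps)
qed

context
  fixes D :: "('n \<Rightarrow> nat) set" and p r m :: nat and W :: "('n \<Rightarrow> nat) \<Rightarrow> nat"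
  assumes p: "p \<ge> 2" and W: "W \<in> E_set D p r" and m: "0 < m" "m < r"
    and period: "phi D p r W m = phi D p r W 0"
begin

private lemma r_ge_1: "r \<ge> 1" and W_le: "\<forall>d\<in>D. W d \<le> p ^ r - 1"
  and W_dvd: "(p ^ r - 1) dvd vsum D W i" and W_pos: "0 < vsum D W i"
  using W by (auto simp: E_set_def)

private lemma vsum_eq_mult: "vsum D W i = (p ^ r - 1) * (vsum D W i div (p ^ r - 1))"
  using W_dvd by simp

private lemma vsum_div_pos: "0 < vsum D W i div (p ^ r - 1)"
  using vsum_eq_mult[of i] W_pos[of i] by (metis gr0I mult_0_right)

private lemma vsum_high_digits:
  "vsum D (high_digits p (r - m) W) i = (p ^ m - 1) * (vsum D W i div (p ^ r - 1))"
  using vsum_digits_of_phi_eq(1)[OF p W _ period vsum_eq_mult] m by simp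

private lemma vsum_low_digits:
  "vsum D (low_digits p (r - m) W) i = (p ^ (r - m) - 1) * (vsum D W i div (p ^ r - 1))"
  using vsum_digits_of_phi_eq(2)[OF p W _ period vsum_eq_mult] m by simp

lemma high_digits_in_E_set: "high_digits p (r - m) W \<in> E_set D p m"
proof -
  have "W d < p ^ m * p ^ (r - m)" if "d \<in> D" for d
    using W_le that power_ge_2[OF p r_ge_1] m by (auto simp flip: power_add)
  then have lt: "high_digits p (r - m) W d < p ^ m" if "d \<in> D" for d
    using that by (simp add: high_digits_def less_mult_imp_div_less)
  have "high_digits p (r - m) W d \<le> p ^ m - 1" if "d \<in> D" for d
    using lt[OF that] by linarith
  moreover have "high_digits p (r - m) W d = 0" if "d \<notin> D" for d
    using W that by (simp add: E_set_def high_digits_def)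
  moreover note vsum_high_digits vsum_div_pos
  moreover have "p ^ m \<ge> 2" using power_ge_2[OF p, of m] m by simp
  ultimately show ?thesis using m by (simp add: E_set_def)
qed

lemma low_digits_in_E_set: "low_digits p (r - m) W \<in> E_set D p (r - m)"
proof -
  have lt: "low_digits p (r - m) W d < p ^ (r - m)" for d
    using p by (simp add: low_digits_def)
  have "low_digits p (r - m) W d \<le> p ^ (r - m) - 1" for d
    using lt[of d] by linarith
  moreover have "low_digits p (r - m) W d = 0" if "d \<notin> D" for d
    using W that by (simp add: E_set_def low_digits_def)
  moreover note vsum_low_digits vsum_div_pos
  moreover have "p ^ (r - m) \<ge> 2" using power_ge_2[OF p, of "r - m"] m by simp
  ultimately show ?thesis using m by (simp add: E_set_def)
qed

lemma phi_eq_phi_high_digits: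
  assumes j: "j \<le> m"
  shows "phi D p r W j = phi D p m (high_digits p (r - m) W) j"
proof
  fix i
  define V g where "V = high_digits p (r - m) W" and "g = vsum D W i div (p ^ r - 1)"
  have V_le: "\<forall>d\<in>D. V d \<le> p ^ m - 1" using high_digits_in_E_set by (simp add: V_def E_set_def)
  have "r - m + (m - j) = r - j" using j m by simp
  then have "high_digits p (r - j) W = high_digits p (m - j) V"
    by (simp add: V_def high_digits_high_digits)
  then have "phi D p r W j i = real (p ^ j * g) - real (vsum D (high_digits p (m - j) V) i)"
    using phi_eq_diff_high_digits[OF p r_ge_1 _ W_le vsum_eq_mult, of j] j m by (simp add: g_def)
  also have "\<dots> = phi D p m V j i"
    using phi_eq_diff_high_digits[OF p _ j V_le, of i g] vsum_high_digits m by (simp add: V_def g_def)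
  finally show "phi D p r W j i = phi D p m (high_digits p (r - m) W) j i" by (simp add: V_def)
qed

lemma phi_add_eq_phi_low_digits:
  assumes j: "j \<le> r - m"
  shows "phi D p r W (m + j) = phi D p (r - m) (low_digits p (r - m) W) j"
proof
  fix i
  define V L g where "V = high_digits p (r - m) W" and "L = low_digits p (r - m) W"
    and "g = vsum D W i div (p ^ r - 1)"
  define T where "T = vsum D (high_digits p (r - m - j) L) i"
  have L_le: "\<forall>d\<in>D. L d \<le> p ^ (r - m) - 1"
    using low_digits_in_E_set by (simp add: L_def E_set_def)
  have "high_digits p (r - (m + j)) W d = V d * p ^ j + high_digits p (r - m - j) L d" for d
    using high_digits_of_low_digits[of p j "r - m" W d] p j by (simp add: V_def L_def)
  then have "vsum D (high_digits p (r - (m + j)) W) i = p ^ j * vsum D V i + T"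
    by (simp add: vsum_def T_def algebra_simps sum.distrib sum_distrib_left)
  then have "phi D p r W (m + j) i = real (p ^ (m + j) * g) - real (p ^ j * ((p ^ m - 1) * g) + T)"
    using phi_eq_diff_high_digits[OF p r_ge_1 _ W_le vsum_eq_mult, of "m + j"] j m vsum_high_digits
    by (simp add: g_def V_def)
  also have "\<dots> = real (p ^ j * g) - real T"
  proof -
    have "p ^ m - 1 + 1 = p ^ m" using p by simp
    then have "p ^ (m + j) * g = p ^ j * ((p ^ m - 1) * g) + p ^ j * g"
      by (metis add_mult_distrib mult.commute mult.left_commute mult_1 power_add)
    then show ?thesis by simp
  qed
  also have "\<dots> = phi D p (r - m) L j i"
    using phi_eq_diff_high_digits[OF p _ j L_le, of i g] vsum_low_digits m
    by (simp add: T_def L_def g_def)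
  finally show "phi D p r W (m + j) i = phi D p (r - m) (low_digits p (r - m) W) j i"
    by (simp add: L_def)
qed

lemma phi_image_subset_high_low_digits:
  "phi D p r W ` {0..<r}
    \<subseteq> phi D p m (high_digits p (r - m) W) ` {0..<m} \<union> phi D p (r - m) (low_digits p (r - m) W) ` {0..<r - m}"
proof
  fix y assume "y \<in> phi D p r W ` {0..<r}"
  then obtain j where j: "j < r" "y = phi D p r W j" by auto
  show "y \<in> phi D p m (high_digits p (r - m) W) ` {0..<m} \<union> phi D p (r - m) (low_digits p (r - m) W) ` {0..<r - m}"
  proof (cases "j < m")
    case True
    then show ?thesis using j phi_eq_phi_high_digits[of j] by auto
  next
    case False
    then have "j = m + (j - m)" "j - m < r - m" using j by auto
    then show ?thesis using j phi_add_eq_phi_low_digits[of "j - m"] by (metis UnI2 atLeastLessThan_iff imageI le0 less_imp_le_nat)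
  qed
qed

end

lemma Inf_ratio_le:
  assumes "X \<in> E_set D p R"
  shows "Inf {real (sp D p U) / real r | r U. 1 \<le> r \<and> U \<in> E_set D p r} \<le> real (sp D p X) / real R"
proof (rule cInf_lower)
  show "real (sp D p X) / real R \<in> {real (sp D p U) / real r | r U. 1 \<le> r \<and> U \<in> E_set D p r}"
    using assms by (auto simp: E_set_def)
  show "bdd_below {real (sp D p U) / real r | r U. 1 \<le> r \<and> U \<in> E_set D p r}"
    by (rule bdd_belowI[of _ 0]) auto
qed

lemma minimal_summands:
  assumes p: "p \<ge> 2" and U: "minimal D p (m + n) U"
    and V: "V \<in> E_set D p m" and L: "L \<in> E_set D p n" and sp: "sp D p U = sp D p V + sp D p L"
  shows "minimal D p m V" and "minimal D p n L"
proof -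
  define I where "I = Inf {real (sp D p U) / real r | r U. 1 \<le> r \<and> U \<in> E_set D p r}"
  have delta: "(real p - 1) * delta p D = I" using p by (simp add: delta_def I_def)
  have "m \<ge> 1" "n \<ge> 1" using V L by (simp_all add: E_set_def)
  then have "real m * I \<le> real (sp D p V)" "real n * I \<le> real (sp D p L)"
    using Inf_ratio_le[OF V] Inf_ratio_le[OF L] by (simp_all add: I_def field_simps)
  moreover have "real (sp D p V) + real (sp D p L) = (real m + real n) * I"
    using U sp by (simp add: minimal_def mult.assoc flip: delta)
  ultimately have "real (sp D p V) = real m * I" "real (sp D p L) = real n * I"
    by (simp_all add: algebra_simps)
  then show "minimal D p m V" "minimal D p n L"
    using V L by (simp_all add: minimal_def mult.assoc mult.commute flip: delta)
qed

lemma phi_image_funpow_shift: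
  assumes "p \<ge> 2" "U \<in> E_set D p r"
  shows "phi D p r ((shift p r ^^ k) U) ` {0..<r} = phi D p r U ` {0..<r}"
proof -
  have "r > 0" using assms(2) by (simp add: E_set_def)
  have periodic: "phi D p r U j = phi D p r U (j mod r)" for j
  proof (induction j rule: less_induct)
    case (less j)
    show ?case
    proof (cases "j < r")
      case False
      then have "phi D p r U j = phi D p r U (j - r)"
        using phi_add_period[OF assms, of "j - r"] by simp
      with less.IH[of "j - r"] False \<open>r > 0\<close> show ?thesis by (simp add: mod_if)
    qed simp
  qed
  have "phi D p r ((shift p r ^^ k) U) ` {0..<r} = (\<lambda>j. phi D p r U ((j + k) mod r)) ` {0..<r}"
    by (simp add: phi_funpow_shift periodic[of "_ + k"])
  also have "\<dots> = phi D p r U ` ((\<lambda>j. (j + k) mod r) ` {0..<r})" by (simp add: image_image)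
  also have "(\<lambda>j. (j + k) mod r) ` {0..<r} = {0..<r}"
  proof (rule endo_inj_surj)
    show "inj_on (\<lambda>j. (j + k) mod r) {0..<r}"
      by (auto simp: inj_on_def cong_add_rcancel_nat simp flip: cong_def
          intro: cong_less_modulus_unique_nat)
  qed (use \<open>r > 0\<close> in auto)
  finally show ?thesis .
qed

lemma minimal_reducible_split:
  assumes p: "p \<ge> 2" and fin: "finite D" and U: "minimal D p r U"
    and reducible: "\<not> irreducible_sol D p r U"
  obtains m V L where "0 < m" "m < r" "minimal D p m V" "minimal D p (r - m) L"
    "phi D p r U ` {0..<r} \<subseteq> phi D p m V ` {0..<m} \<union> phi D p (r - m) L ` {0..<r - m}"
proof -
  have UE: "U \<in> E_set D p r" using U by (simp add: minimal_def)
  obtain k1 k2 where k: "k1 < k2" "k2 < r" and eq: "phi D p r U k1 = phi D p r U k2"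
    using reducible unfolding irreducible_sol_def inj_on_def
    by (metis atLeastLessThan_iff linorder_neqE_nat)
  define W m where "W = (shift p r ^^ k1) U" and "m = k2 - k1"
  have WE: "W \<in> E_set D p r" using funpow_shift_in_E_set[OF p fin UE] by (simp add: W_def)
  have m: "0 < m" "m < r" using k by (simp_all add: m_def)
  have period: "phi D p r W m = phi D p r W 0"
    using eq k by (simp add: W_def m_def phi_funpow_shift)
  note V = high_digits_in_E_set[OF p WE m period] and L = low_digits_in_E_set[OF p WE m period]
  have sp: "sp D p U = sp D p (high_digits p (r - m) W) + sp D p (low_digits p (r - m) W)"
    using sp_funpow_shift[OF p fin UE, of k1] sp_high_low_digits[OF p, of D W "r - m"]
    by (simp add: W_def)
  have U': "minimal D p (m + (r - m)) U" using U m by simp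
  have "phi D p r U ` {0..<r} = phi D p r W ` {0..<r}"
    using phi_image_funpow_shift[OF p UE] by (simp add: W_def)
  then show ?thesis
    using that[OF m minimal_summands[OF p U' V L sp]] phi_image_subset_high_low_digits[OF p WE m period]
    by simp
qed

lemma phi_image_subset_Sigma_p_if_minimal:
  assumes p: "p \<ge> 2" and fin: "finite D"
  shows "minimal D p r U \<Longrightarrow> phi D p r U ` {0..<r} \<subseteq> Sigma_p p D"
proof (induction r arbitrary: U rule: less_induct)
  case (less r U)
  show ?case
  proof (cases "irreducible_sol D p r U")
    case True
    then have "(r, U) \<in> MI D p" using less.prems by (simp add: MI_def)
    then show ?thesis by (force simp: Sigma_p_def)
  next
    case False
    then obtain m V L where "0 < m" "m < r" "minimal D p m V" "minimal D p (r - m) L"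
      and split: "phi D p r U ` {0..<r} \<subseteq> phi D p m V ` {0..<m} \<union> phi D p (r - m) L ` {0..<r - m}"
      using minimal_reducible_split[OF p fin less.prems] by blast
    then have "phi D p m V ` {0..<m} \<subseteq> Sigma_p p D" "phi D p (r - m) L ` {0..<r - m} \<subseteq> Sigma_p p D"
      using less.IH by simp_all
    with split show ?thesis by blast
  qed
qed

theorem lemma2p11:
  fixes D :: "('n::finite \<Rightarrow> nat) set" and p r :: nat and U :: "('n \<Rightarrow> nat) \<Rightarrow> nat"
  assumes "finite D"
    and "\<forall>i. \<exists>d\<in>D. d i \<noteq> 0"
    and "prime p"
    and "U \<in> E_set D p r"
    and "minimal D p r U"
  shows "phi D p r U ` {0..<r} \<subseteq> Sigma_p p D"
  \<comment> \<open>Neither the coordinate-hyperplane condition nor primality beyond p \<ge> 2 is needed.\<close>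
  using phi_image_subset_Sigma_p_if_minimal[OF prime_ge_2_nat[OF assms(3)] assms(1,5)] .

end
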